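(* Let $(Q,P)$ be a weakly quasi-lattice ordered group and let $\Lambda$ be a $P$-graph with $\mathrm{FA}(\Lambda)\neq\emptyset$. If $\lambda\in x\in\mathcal{X}(\Lambda)$, then $\lambda^*\cdot x\in\mathcal{X}(\Lambda)$.
   Context: $(Q,P)$ weakly quasi-lattice ordered: $Q$ a discrete group, $P\subseteq Q$ a subsemigroup containing the identity $e$ with $P\cap P^{-1}=\{e\}$, and, with $p\le r$ meaning $pq=r$ for some $q\in P$, any two elements of $P$ with a common upper bound have a least common upper bound. A $P$-graph is a countable small category $\Lambda$ (range/source $r,s$) with a functor $d:\Lambda\to P$ with unique factorisation (if $d(\lambda)=pq$ there are unique $\mu,\nu$ with $\lambda=\mu\nu$, $d(\mu)=p$, $d(\nu)=q$). Write $\lambda\Lambda=\{\lambda\mu: s(\lambda)=r(\mu)\}$, $\mu\preceq\lambda$ iff $\lambda\in\mu\Lambda$. $\mathrm{FA}(\Lambda)$ is the set of $\lambda$ such that for all $\mu\in\lambda\Lambda,\nu\in\Lambda$ there is finite $J\subseteq\Lambda$ with $\mu\Lambda\cap\nu\Lambda=\bigcup_{\kappa\in J}\kappa\Lambda$. A filter is a nonempty hereditary and directed subset of $\Lambda$ (w.r.t. $\preceq$). The path space is $\mathcal{X}(\Lambda)=\{x\text{ filter}: x\cap\mathrm{FA}(\Lambda)\neq\emptyset\}$. For a filter $x$ and $\lambda\in x$, $\lambda^*\cdot x=\{\mu\in\Lambda:\lambda\mu\in x\}$. *)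

theory Defs
  imports "HOL-Algebra.Group" "HOL-Library.Countable_Set"
begin

definition wqlo_le :: "('q, 'm) monoid_scheme \<Rightarrow> 'q set \<Rightarrow> 'q \<Rightarrow> 'q \<Rightarrow> bool" where
  "wqlo_le G P p r \<longleftrightarrow> (\<exists>q\<in>P. p \<otimes>\<^bsub>G\<^esub> q = r)"

definition wqlo :: "('q, 'm) monoid_scheme \<Rightarrow> 'q set \<Rightarrow> bool" where
  "wqlo G P \<longleftrightarrow> group G \<and> P \<subseteq> carrier G \<and> \<one>\<^bsub>G\<^esub> \<in> P
     \<and> (\<forall>p\<in>P. \<forall>q\<in>P. p \<otimes>\<^bsub>G\<^esub> q \<in> P)
     \<and> P \<inter> (\<lambda>p. inv\<^bsub>G\<^esub> p) ` P = {\<one>\<^bsub>G\<^esub>}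
     \<and> (\<forall>p\<in>P. \<forall>r\<in>P. (\<exists>u\<in>P. wqlo_le G P p u \<and> wqlo_le G P r u) \<longrightarrow>
          (\<exists>l\<in>P. wqlo_le G P p l \<and> wqlo_le G P r l \<and>
             (\<forall>u\<in>P. wqlo_le G P p u \<and> wqlo_le G P r u \<longrightarrow> wqlo_le G P l u)))"

text \<open>A small category with object set Obj, morphism set Mor, range rng, source src,
  composition cmp (cmp l m is the composite l m, defined when src l = rng m) and
  identities idt; d is the degree functor into (P, \<otimes>).\<close>
definition P_graph ::
  "('q, 'm) monoid_scheme \<Rightarrow> 'q set \<Rightarrow> 'o set \<Rightarrow> 'a set \<Rightarrow> ('a \<Rightarrow> 'o) \<Rightarrow> ('a \<Rightarrow> 'o)
    \<Rightarrow> ('a \<Rightarrow> 'a \<Rightarrow> 'a) \<Rightarrow> ('o \<Rightarrow> 'a) \<Rightarrow> ('a \<Rightarrow> 'q) \<Rightarrow> bool" where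
  "P_graph G P Obj Mor rng src cmp idt d \<longleftrightarrow>
     countable Obj \<and> countable Mor
     \<and> (\<forall>l\<in>Mor. rng l \<in> Obj \<and> src l \<in> Obj)
     \<and> (\<forall>v\<in>Obj. idt v \<in> Mor \<and> rng (idt v) = v \<and> src (idt v) = v)
     \<and> (\<forall>l\<in>Mor. \<forall>m\<in>Mor. src l = rng m \<longrightarrow>
          cmp l m \<in> Mor \<and> rng (cmp l m) = rng l \<and> src (cmp l m) = src m)
     \<and> (\<forall>l\<in>Mor. \<forall>m\<in>Mor. \<forall>n\<in>Mor. src l = rng m \<longrightarrow> src m = rng n \<longrightarrow>
          cmp (cmp l m) n = cmp l (cmp m n))
     \<and> (\<forall>l\<in>Mor. cmp (idt (rng l)) l = l \<and> cmp l (idt (src l)) = l)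
     \<and> (\<forall>l\<in>Mor. d l \<in> P)
     \<and> (\<forall>v\<in>Obj. d (idt v) = \<one>\<^bsub>G\<^esub>)
     \<and> (\<forall>l\<in>Mor. \<forall>m\<in>Mor. src l = rng m \<longrightarrow> d (cmp l m) = d l \<otimes>\<^bsub>G\<^esub> d m)
     \<and> (\<forall>l\<in>Mor. \<forall>p\<in>P. \<forall>q\<in>P. d l = p \<otimes>\<^bsub>G\<^esub> q \<longrightarrow>
          (\<exists>!mn. fst mn \<in> Mor \<and> snd mn \<in> Mor \<and> src (fst mn) = rng (snd mn)
                \<and> l = cmp (fst mn) (snd mn) \<and> d (fst mn) = p \<and> d (snd mn) = q))"

definition ext_set :: "'a set \<Rightarrow> ('a \<Rightarrow> 'o) \<Rightarrow> ('a \<Rightarrow> 'o) \<Rightarrow> ('a \<Rightarrow> 'a \<Rightarrow> 'a) \<Rightarrow> 'a \<Rightarrow> 'a set" where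
  "ext_set Mor rng src cmp l = {cmp l m | m. m \<in> Mor \<and> src l = rng m}"

definition path_le :: "'a set \<Rightarrow> ('a \<Rightarrow> 'o) \<Rightarrow> ('a \<Rightarrow> 'o) \<Rightarrow> ('a \<Rightarrow> 'a \<Rightarrow> 'a) \<Rightarrow> 'a \<Rightarrow> 'a \<Rightarrow> bool" where
  "path_le Mor rng src cmp m l \<longleftrightarrow> l \<in> ext_set Mor rng src cmp m"

definition FA :: "'a set \<Rightarrow> ('a \<Rightarrow> 'o) \<Rightarrow> ('a \<Rightarrow> 'o) \<Rightarrow> ('a \<Rightarrow> 'a \<Rightarrow> 'a) \<Rightarrow> 'a set" where
  "FA Mor rng src cmp = {l \<in> Mor. \<forall>m\<in>ext_set Mor rng src cmp l. \<forall>n\<in>Mor.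
      \<exists>J. finite J \<and> J \<subseteq> Mor \<and>
        ext_set Mor rng src cmp m \<inter> ext_set Mor rng src cmp n
          = (\<Union>k\<in>J. ext_set Mor rng src cmp k)}"

definition is_filter :: "'a set \<Rightarrow> ('a \<Rightarrow> 'o) \<Rightarrow> ('a \<Rightarrow> 'o) \<Rightarrow> ('a \<Rightarrow> 'a \<Rightarrow> 'a) \<Rightarrow> 'a set \<Rightarrow> bool" where
  "is_filter Mor rng src cmp x \<longleftrightarrow> x \<subseteq> Mor \<and> x \<noteq> {}
     \<and> (\<forall>l\<in>x. \<forall>m\<in>Mor. path_le Mor rng src cmp m l \<longrightarrow> m \<in> x)
     \<and> (\<forall>l\<in>x. \<forall>m\<in>x. \<exists>n\<in>x. path_le Mor rng src cmp l n \<and> path_le Mor rng src cmp m n)"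

definition path_space :: "'a set \<Rightarrow> ('a \<Rightarrow> 'o) \<Rightarrow> ('a \<Rightarrow> 'o) \<Rightarrow> ('a \<Rightarrow> 'a \<Rightarrow> 'a) \<Rightarrow> 'a set set" where
  "path_space Mor rng src cmp = {x. is_filter Mor rng src cmp x \<and> x \<inter> FA Mor rng src cmp \<noteq> {}}"

text \<open>l^* \<cdot> x = {m : l m \<in> x}\<close>
definition shift :: "'a set \<Rightarrow> ('a \<Rightarrow> 'o) \<Rightarrow> ('a \<Rightarrow> 'o) \<Rightarrow> ('a \<Rightarrow> 'a \<Rightarrow> 'a) \<Rightarrow> 'a \<Rightarrow> 'a set \<Rightarrow> 'a set" where
  "shift Mor rng src cmp l x = {m \<in> Mor. src l = rng m \<and> cmp l m \<in> x}"

end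

theory Submission
  imports Defs
begin

text \<open>Because degrees live in a group, unique factorisation makes composition with a fixed
  path \<open>\<lambda>\<close> injective, so \<open>\<mu> \<mapsto> \<lambda>\<mu>\<close> identifies \<open>\<mu>\<Lambda>\<close> with \<open>(\<lambda>\<mu>)\<Lambda>\<close>. Hereditariness,
  directedness and finite alignment are all transported backwards along this identification.
  Finally, a filter meeting \<open>FA(\<Lambda>)\<close> and containing \<open>\<lambda>\<close> contains a common extension
  \<open>\<lambda>\<kappa>\<close> of \<open>\<lambda>\<close> and a finitely aligned path; \<open>\<lambda>\<kappa>\<close> is finitely aligned, hence so is
  \<open>\<kappa> \<in> \<lambda>\<^sup>* \<cdot> x\<close>.\<close>

locale P_graph_in_group =
  fixes G :: "('q, 'm) monoid_scheme" and P :: "'q set"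
    and Obj :: "'o set" and Mor :: "'a set" and rng src :: "'a \<Rightarrow> 'o"
    and cmp :: "'a \<Rightarrow> 'a \<Rightarrow> 'a" and idt :: "'o \<Rightarrow> 'a" and d :: "'a \<Rightarrow> 'q"
  assumes group: "group G" and P_carrier: "P \<subseteq> carrier G"
    and P_graph: "P_graph G P Obj Mor rng src cmp idt d"
begin

abbreviation ext :: "'a \<Rightarrow> 'a set" where
  "ext \<equiv> ext_set Mor rng src cmp"

lemma rng_src_Obj: "l \<in> Mor \<Longrightarrow> rng l \<in> Obj \<and> src l \<in> Obj"
  using P_graph unfolding P_graph_def by blast

lemma idt_Mor: "v \<in> Obj \<Longrightarrow> idt v \<in> Mor \<and> rng (idt v) = v \<and> src (idt v) = v"
  using P_graph unfolding P_graph_def by blast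

lemma cmp_Mor:
  "l \<in> Mor \<Longrightarrow> m \<in> Mor \<Longrightarrow> src l = rng m \<Longrightarrow>
    cmp l m \<in> Mor \<and> rng (cmp l m) = rng l \<and> src (cmp l m) = src m"
  using P_graph unfolding P_graph_def by blast

lemma cmp_assoc:
  "l \<in> Mor \<Longrightarrow> m \<in> Mor \<Longrightarrow> n \<in> Mor \<Longrightarrow> src l = rng m \<Longrightarrow> src m = rng n \<Longrightarrow>
    cmp (cmp l m) n = cmp l (cmp m n)"
  using P_graph unfolding P_graph_def by blast

lemma cmp_idt_src: "l \<in> Mor \<Longrightarrow> cmp l (idt (src l)) = l"
  using P_graph unfolding P_graph_def by blast

lemma d_P: "l \<in> Mor \<Longrightarrow> d l \<in> P"
  using P_graph unfolding P_graph_def by blast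

lemma d_carrier: "l \<in> Mor \<Longrightarrow> d l \<in> carrier G"
  using d_P P_carrier by blast

lemma d_cmp: "l \<in> Mor \<Longrightarrow> m \<in> Mor \<Longrightarrow> src l = rng m \<Longrightarrow> d (cmp l m) = d l \<otimes>\<^bsub>G\<^esub> d m"
  using P_graph unfolding P_graph_def by blast

lemma ex1_factorisation:
  "l \<in> Mor \<Longrightarrow> p \<in> P \<Longrightarrow> q \<in> P \<Longrightarrow> d l = p \<otimes>\<^bsub>G\<^esub> q \<Longrightarrow>
    \<exists>!mn. fst mn \<in> Mor \<and> snd mn \<in> Mor \<and> src (fst mn) = rng (snd mn)
      \<and> l = cmp (fst mn) (snd mn) \<and> d (fst mn) = p \<and> d (snd mn) = q"
  using P_graph unfolding P_graph_def by blast

lemma unique_factorisation: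
  assumes "l \<in> Mor" "m \<in> Mor" "src l = rng m"
    and "l' \<in> Mor" "m' \<in> Mor" "src l' = rng m'"
    and "cmp l m = cmp l' m'" "d l = d l'" "d m = d m'"
  shows "l = l' \<and> m = m'"
proof -
  have "(l, m) = (l', m')"
    using ex1_factorisation[OF _ d_P d_P d_cmp, of l m] cmp_Mor assms by (metis fst_conv snd_conv)
  then show ?thesis by simp
qed

lemma cmp_left_cancel:
  assumes "l \<in> Mor" "a \<in> Mor" "b \<in> Mor" "src l = rng a" "src l = rng b"
    and "cmp l a = cmp l b"
  shows "a = b"
proof -
  interpret G: group G by (rule group)
  have "d l \<otimes>\<^bsub>G\<^esub> d a = d l \<otimes>\<^bsub>G\<^esub> d b"
    using assms d_cmp by metis
  then have "d a = d b"
    by (simp add: G.Units_eq d_carrier assms(1-3))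
  then show ?thesis
    using unique_factorisation[of l a l b] assms by blast
qed

lemma inj_on_cmp: "l \<in> Mor \<Longrightarrow> inj_on (cmp l) {a \<in> Mor. rng a = src l}"
  by (rule inj_onI) (auto intro: cmp_left_cancel)

lemma ext_eq_image: "ext m = cmp m ` {a \<in> Mor. src m = rng a}"
  unfolding ext_set_def by blast

lemma mem_ext: "m \<in> Mor \<Longrightarrow> a \<in> ext m \<Longrightarrow> a \<in> Mor \<and> rng a = rng m"
  unfolding ext_eq_image using cmp_Mor by auto

lemma ext_subset: "m \<in> Mor \<Longrightarrow> ext m \<subseteq> {a \<in> Mor. rng a = rng m}"
  using mem_ext by blast

lemma mem_ext_self:
  assumes "m \<in> Mor" shows "m \<in> ext m"
proof -
  have "idt (src m) \<in> Mor" "src m = rng (idt (src m))"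
    using idt_Mor rng_src_Obj assms by auto
  then show ?thesis
    unfolding ext_eq_image using cmp_idt_src[OF assms] by (auto simp: image_iff)
qed

lemma ext_cmp:
  assumes l: "l \<in> Mor" and m: "m \<in> Mor" "src l = rng m"
  shows "ext (cmp l m) = cmp l ` ext m"
proof -
  have "cmp (cmp l m) a = cmp l (cmp m a)" if "a \<in> Mor" "src m = rng a" for a
    using that l m cmp_assoc by blast
  then have "ext (cmp l m) = (\<lambda>a. cmp l (cmp m a)) ` {a \<in> Mor. src m = rng a}"
    unfolding ext_eq_image using l m cmp_Mor by (auto simp: image_iff)
  then show ?thesis
    unfolding ext_eq_image[of m] by (simp add: image_image)
qed

lemma ext_mono:
  assumes m: "m \<in> Mor" and n: "n \<in> ext m"
  shows "ext n \<subseteq> ext m"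
proof -
  obtain a where a: "a \<in> Mor" "src m = rng a" "n = cmp m a"
    using n unfolding ext_eq_image by blast
  have "ext n = cmp m ` ext a"
    using a m ext_cmp by blast
  also have "\<dots> \<subseteq> cmp m ` {b \<in> Mor. src m = rng b}"
    using ext_subset[OF a(1)] a(2) by auto
  finally show ?thesis
    unfolding ext_eq_image .
qed

lemma ext_cmp_Int:
  assumes l: "l \<in> Mor" and mn: "m \<in> Mor" "n \<in> Mor" "src l = rng m" "src l = rng n"
  shows "ext (cmp l m) \<inter> ext (cmp l n) = cmp l ` (ext m \<inter> ext n)"
proof -
  have "ext m \<subseteq> {a \<in> Mor. rng a = src l}" "ext n \<subseteq> {a \<in> Mor. rng a = src l}"
    using ext_subset[OF mn(1)] ext_subset[OF mn(2)] mn(3,4) by auto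
  then have "cmp l ` ext m \<inter> cmp l ` ext n = cmp l ` (ext m \<inter> ext n)"
    using inj_on_image_Int[OF inj_on_cmp[OF l]] by blast
  then show ?thesis
    using ext_cmp l mn by simp
qed

definition finitely_aligned :: "'a \<Rightarrow> 'a \<Rightarrow> bool" where
  "finitely_aligned m n \<longleftrightarrow> (\<exists>J. finite J \<and> J \<subseteq> Mor \<and> ext m \<inter> ext n = (\<Union>k\<in>J. ext k))"

lemma FA_eq_finitely_aligned: "FA Mor rng src cmp = {l \<in> Mor. \<forall>m\<in>ext l. \<forall>n\<in>Mor. finitely_aligned m n}"
  by (simp add: FA_def finitely_aligned_def)

lemma finitely_aligned_rng_ne:
  assumes "m \<in> Mor" "n \<in> Mor" "rng m \<noteq> rng n"
  shows "finitely_aligned m n"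
proof -
  have "ext m \<inter> ext n = {}"
    using ext_subset[of m] ext_subset[of n] assms by fastforce
  then show ?thesis
    unfolding finitely_aligned_def by (intro exI[of _ "{}"]) simp
qed

lemma finitely_aligned_cancel:
  assumes l: "l \<in> Mor" and mn: "m \<in> Mor" "n \<in> Mor" "src l = rng m" "src l = rng n"
    and aligned: "finitely_aligned (cmp l m) (cmp l n)"
  shows "finitely_aligned m n"
proof -
  let ?D = "{a \<in> Mor. rng a = src l}"
  have Int_D: "ext m \<inter> ext n \<subseteq> ?D"
    using ext_subset[OF mn(1)] mn(3) by auto
  obtain J where J: "finite J" "J \<subseteq> Mor"
    and "ext (cmp l m) \<inter> ext (cmp l n) = (\<Union>k\<in>J. ext k)"
    using aligned unfolding finitely_aligned_def by blast
  then have Int_eq: "cmp l ` (ext m \<inter> ext n) = (\<Union>k\<in>J. ext k)"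
    using ext_cmp_Int[OF l mn] by simp
  have "J \<subseteq> cmp l ` (ext m \<inter> ext n)"
  proof
    fix k assume "k \<in> J"
    then have "k \<in> ext k" using mem_ext_self J(2) by blast
    then show "k \<in> cmp l ` (ext m \<inter> ext n)" unfolding Int_eq using \<open>k \<in> J\<close> by blast
  qed
  then obtain J' where J': "J' \<subseteq> ext m \<inter> ext n" "finite J'" "J = cmp l ` J'"
    using finite_subset_image[OF J(1)] by blast
  have J'_D: "J' \<subseteq> ?D"
    using J'(1) Int_D by (rule subset_trans)
  have "(\<Union>k\<in>J. ext k) = (\<Union>k\<in>J'. ext (cmp l k))"
    unfolding J'(3) by simp
  also have "\<dots> = (\<Union>k\<in>J'. cmp l ` ext k)"
    using ext_cmp[OF l] J'_D by (intro SUP_cong) auto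
  also have "\<dots> = cmp l ` (\<Union>k\<in>J'. ext k)"
    by (simp add: image_UN)
  finally have "cmp l ` (ext m \<inter> ext n) = cmp l ` (\<Union>k\<in>J'. ext k)"
    using Int_eq by simp
  moreover have "(\<Union>k\<in>J'. ext k) \<subseteq> ext m \<inter> ext n"
    using ext_mono[OF mn(1)] ext_mono[OF mn(2)] J'(1) by blast
  then have "(\<Union>k\<in>J'. ext k) \<subseteq> ?D"
    using Int_D by (rule subset_trans)
  ultimately have "ext m \<inter> ext n = (\<Union>k\<in>J'. ext k)"
    using inj_on_image_eq_iff[OF inj_on_cmp[OF l] Int_D] by blast
  then show ?thesis
    unfolding finitely_aligned_def using J' J'_D by blast
qed

lemma FA_ext_closed: "y \<in> FA Mor rng src cmp \<Longrightarrow> n \<in> ext y \<Longrightarrow> n \<in> FA Mor rng src cmp"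
  unfolding FA_eq_finitely_aligned using ext_mono ext_subset by blast

lemma FA_cmp_cancel:
  assumes l: "l \<in> Mor" and k: "k \<in> Mor" "src l = rng k"
    and FA: "cmp l k \<in> FA Mor rng src cmp"
  shows "k \<in> FA Mor rng src cmp"
proof -
  have "finitely_aligned m n" if m: "m \<in> ext k" and n: "n \<in> Mor" for m n
  proof -
    have m_Mor: "m \<in> Mor" "src l = rng m"
      using mem_ext[OF k(1) m] k(2) by auto
    show ?thesis
    proof (cases "src l = rng n")
      case True
      have "cmp l m \<in> ext (cmp l k)"
        using ext_cmp[OF l k] m by simp
      moreover have "cmp l n \<in> Mor"
        using cmp_Mor[OF l n True] by blast
      ultimately have "finitely_aligned (cmp l m) (cmp l n)"
        using FA unfolding FA_eq_finitely_aligned by blast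
      then show ?thesis
        by (rule finitely_aligned_cancel[OF l m_Mor(1) n m_Mor(2) True])
    next
      case False
      then show ?thesis
        using finitely_aligned_rng_ne[OF m_Mor(1) n] m_Mor(2) by simp
    qed
  qed
  then show ?thesis
    unfolding FA_eq_finitely_aligned using k(1) by blast
qed

lemma is_filter_iff:
  "is_filter Mor rng src cmp x \<longleftrightarrow> x \<subseteq> Mor \<and> x \<noteq> {}
     \<and> (\<forall>a\<in>x. \<forall>b\<in>Mor. a \<in> ext b \<longrightarrow> b \<in> x)
     \<and> (\<forall>a\<in>x. \<forall>b\<in>x. \<exists>c\<in>x. c \<in> ext a \<and> c \<in> ext b)"
  by (simp add: is_filter_def path_le_def)

lemma shift_is_filter:
  assumes x: "is_filter Mor rng src cmp x" and "l \<in> x"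
  shows "is_filter Mor rng src cmp (shift Mor rng src cmp l x)"
proof -
  let ?S = "shift Mor rng src cmp l x"
  have x_Mor: "x \<subseteq> Mor"
    and hereditary: "\<And>a b. a \<in> x \<Longrightarrow> b \<in> Mor \<Longrightarrow> a \<in> ext b \<Longrightarrow> b \<in> x"
    and directed: "\<And>a b. a \<in> x \<Longrightarrow> b \<in> x \<Longrightarrow> \<exists>c\<in>x. c \<in> ext a \<and> c \<in> ext b"
    using x unfolding is_filter_iff by blast+
  have l: "l \<in> Mor" using x_Mor \<open>l \<in> x\<close> by blast
  have S: "a \<in> ?S \<longleftrightarrow> a \<in> Mor \<and> src l = rng a \<and> cmp l a \<in> x" for a
    unfolding shift_def by blast
  have "idt (src l) \<in> ?S"
    using S idt_Mor[OF conjunct2[OF rng_src_Obj[OF l]]] cmp_idt_src[OF l] \<open>l \<in> x\<close> by simp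
  then have nonempty: "?S \<noteq> {}" by blast
  have hereditary_S: "\<forall>a\<in>?S. \<forall>b\<in>Mor. a \<in> ext b \<longrightarrow> b \<in> ?S"
  proof (intro ballI impI)
    fix a b assume a: "a \<in> ?S" and b: "b \<in> Mor" "a \<in> ext b"
    have a': "a \<in> Mor" "src l = rng a" "cmp l a \<in> x" using S a by auto
    then have lb: "src l = rng b" using mem_ext[OF b] by simp
    then have "cmp l a \<in> ext (cmp l b)" using ext_cmp[OF l b(1)] b(2) by simp
    then have "cmp l b \<in> x" using hereditary a'(3) cmp_Mor[OF l b(1) lb] by blast
    then show "b \<in> ?S" using S b(1) lb by blast
  qed
  have directed_S: "\<forall>a\<in>?S. \<forall>b\<in>?S. \<exists>c\<in>?S. c \<in> ext a \<and> c \<in> ext b"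
  proof (intro ballI)
    fix a b assume "a \<in> ?S" "b \<in> ?S"
    then have a: "a \<in> Mor" "src l = rng a" "cmp l a \<in> x"
      and b: "b \<in> Mor" "src l = rng b" "cmp l b \<in> x"
      using S by auto
    obtain c where c: "c \<in> x" "c \<in> ext (cmp l a) \<inter> ext (cmp l b)"
      using directed[OF a(3) b(3)] by blast
    then obtain c' where c': "c' \<in> ext a \<inter> ext b" "c = cmp l c'"
      using ext_cmp_Int[OF l a(1) b(1) a(2) b(2)] by blast
    then have "c' \<in> ?S"
      using S mem_ext[OF a(1)] a(2) c(1) by auto
    then show "\<exists>c\<in>?S. c \<in> ext a \<and> c \<in> ext b" using c' by blast
  qed
  have "?S \<subseteq> Mor"
    unfolding shift_def by blast
  then show ?thesis
    unfolding is_filter_iff using nonempty hereditary_S directed_S by (intro conjI)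
qed

lemma shift_meets_FA:
  assumes x: "is_filter Mor rng src cmp x" "x \<inter> FA Mor rng src cmp \<noteq> {}" and "l \<in> x"
  shows "shift Mor rng src cmp l x \<inter> FA Mor rng src cmp \<noteq> {}"
proof -
  have l: "l \<in> Mor"
    using x(1) \<open>l \<in> x\<close> unfolding is_filter_iff by blast
  obtain y where y: "y \<in> x" "y \<in> FA Mor rng src cmp"
    using x(2) by blast
  then obtain n where n: "n \<in> x" "n \<in> ext l" "n \<in> ext y"
    using x(1) \<open>l \<in> x\<close> unfolding is_filter_iff by blast
  obtain k where k: "k \<in> Mor" "src l = rng k" "n = cmp l k"
    using n(2) unfolding ext_eq_image by blast
  have "k \<in> FA Mor rng src cmp"
    using FA_cmp_cancel[OF l k(1,2)] FA_ext_closed[OF y(2) n(3)] k(3) by simp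
  moreover have "k \<in> shift Mor rng src cmp l x"
    unfolding shift_def using k n(1) by blast
  ultimately show ?thesis by blast
qed

end

text \<open>Likewise only the group structure of \<open>Q\<close> is used.\<close>

theorem lemma5p5:
  fixes G :: "('q, 'm) monoid_scheme" and P :: "'q set"
    and Obj :: "'o set" and Mor :: "'a set" and rng src :: "'a \<Rightarrow> 'o"
    and cmp :: "'a \<Rightarrow> 'a \<Rightarrow> 'a" and idt :: "'o \<Rightarrow> 'a" and d :: "'a \<Rightarrow> 'q"
  assumes "wqlo G P"
    and "P_graph G P Obj Mor rng src cmp idt d"
    and "FA Mor rng src cmp \<noteq> {}"
    and "x \<in> path_space Mor rng src cmp"
    and "l \<in> x"
  shows "shift Mor rng src cmp l x \<in> path_space Mor rng src cmp"
proof -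
  have "group G" "P \<subseteq> carrier G"
    using assms(1) unfolding wqlo_def by blast+
  then interpret P_graph_in_group G P Obj Mor rng src cmp idt d
    using assms(2) by (rule P_graph_in_group.intro)
  show ?thesis
    using assms(4,5) shift_is_filter shift_meets_FA unfolding path_space_def by blast
qed

end
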